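(* Let $G$ be a countable vertex set and let $c,b$ be conductance functions on $G$ with $b_{xy}\le c_{xy}$ for all $x,y$, such that $(G,c)$ and $(G,b)$ are connected locally finite networks. Then the inclusion map $\mathcal I:\mathcal H_{\mathcal E_c}\to\mathcal H_{\mathcal E_b}$ is injective.
   Context: A conductance function on a countable set $G$ is a symmetric map $c:G\times G\to[0,\infty)$ with $c_{xx}=0$; $x\sim y$ iff $c_{xy}>0$; locally finite and connected (any two vertices joined by a finite path). $\mathcal E_c(u,v)=\frac12\sum_{x,y}c_{xy}\overline{(u(x)-u(y))}(v(x)-v(y))$, and $\mathcal H_{\mathcal E_c}$ is the Hilbert space of functions $u:G\to\mathbb C$ with $\mathcal E_c(u,u)<\infty$ modulo constants, with inner product $\mathcal E_c$. Same for $b$. $\mathcal I$ sends the class of $u$ in $\mathcal H_{\mathcal E_c}$ to its class in $\mathcal H_{\mathcal E_b}$. *)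

theory Defs
  imports "HOL-Analysis.Analysis"
begin

definition conductance :: "'a set \<Rightarrow> ('a \<Rightarrow> 'a \<Rightarrow> real) \<Rightarrow> bool" where
  "conductance G c \<longleftrightarrow>
     (\<forall>x\<in>G. \<forall>y\<in>G. c x y = c y x \<and> c x y \<ge> 0) \<and> (\<forall>x\<in>G. c x x = 0)"

definition adjacent :: "'a set \<Rightarrow> ('a \<Rightarrow> 'a \<Rightarrow> real) \<Rightarrow> 'a \<Rightarrow> 'a \<Rightarrow> bool" where
  "adjacent G c x y \<longleftrightarrow> x \<in> G \<and> y \<in> G \<and> c x y > 0"

definition locally_finite_net :: "'a set \<Rightarrow> ('a \<Rightarrow> 'a \<Rightarrow> real) \<Rightarrow> bool" where
  "locally_finite_net G c \<longleftrightarrow> (\<forall>x\<in>G. finite {y\<in>G. c x y > 0})"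

definition connected_net :: "'a set \<Rightarrow> ('a \<Rightarrow> 'a \<Rightarrow> real) \<Rightarrow> bool" where
  "connected_net G c \<longleftrightarrow> (\<forall>x\<in>G. \<forall>y\<in>G. (adjacent G c)\<^sup>*\<^sup>* x y)"

text \<open>Energy E_c(u,u) = 1/2 sum_{x,y} c_xy |u x - u y|^2 (nonnegative terms).\<close>
definition energy_terms :: "('a \<Rightarrow> 'a \<Rightarrow> real) \<Rightarrow> ('a \<Rightarrow> complex) \<Rightarrow> 'a \<times> 'a \<Rightarrow> real" where
  "energy_terms c u = (\<lambda>(x,y). c x y * (cmod (u x - u y))\<^sup>2)"

definition finite_energy :: "'a set \<Rightarrow> ('a \<Rightarrow> 'a \<Rightarrow> real) \<Rightarrow> ('a \<Rightarrow> complex) \<Rightarrow> bool" where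
  "finite_energy G c u \<longleftrightarrow> energy_terms c u summable_on (G \<times> G)"

text \<open>The class of u in H_{E_c}: finite-energy functions differing from u by a constant on G.\<close>
definition energy_class :: "'a set \<Rightarrow> ('a \<Rightarrow> 'a \<Rightarrow> real) \<Rightarrow> ('a \<Rightarrow> complex) \<Rightarrow> ('a \<Rightarrow> complex) set" where
  "energy_class G c u = {v. finite_energy G c v \<and> (\<exists>k. \<forall>x\<in>G. v x = u x + k)}"

definition energy_space :: "'a set \<Rightarrow> ('a \<Rightarrow> 'a \<Rightarrow> real) \<Rightarrow> ('a \<Rightarrow> complex) set set" where
  "energy_space G c = {energy_class G c u | u. finite_energy G c u}"

definition inclusion_map :: "'a set \<Rightarrow> ('a \<Rightarrow> 'a \<Rightarrow> real) \<Rightarrow> ('a \<Rightarrow> complex) set \<Rightarrow> ('a \<Rightarrow> complex) set" where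
  "inclusion_map G b U = energy_class G b (SOME u. u \<in> U)"

end

theory Submission
  imports Defs
begin

text \<open>Since b \<le> c, every function of finite c-energy has finite b-energy, and a class in H_{E_c}
  and its image under I are represented by the same function; both spaces identify functions
  differing by an additive constant on G. So if two classes have the same image, their
  representatives differ by a constant, and the classes already coincide in H_{E_c}.\<close>

lemma finite_energy_mono:
  assumes "conductance G b" "\<forall>x\<in>G. \<forall>y\<in>G. b x y \<le> c x y" "finite_energy G c u"
  shows "finite_energy G b u"
  unfolding finite_energy_def
proof (rule summable_on_comparison_test[where f = "energy_terms c u"])
  show "energy_terms c u summable_on G \<times> G"
    using assms(3) by (simp add: finite_energy_def)
next
  fix p assume "p \<in> G \<times> G"
  then obtain x y where p: "p = (x, y)" "x \<in> G" "y \<in> G" by auto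
  show "energy_terms b u p \<le> energy_terms c u p"
    using p assms(2) by (auto simp: energy_terms_def intro: mult_right_mono)
  show "0 \<le> energy_terms b u p"
    using p assms(1) by (auto simp: energy_terms_def conductance_def)
qed

lemma mem_energy_class_self:
  "finite_energy G c u \<Longrightarrow> u \<in> energy_class G c u"
  by (auto simp: energy_class_def intro: exI[of _ 0])

lemma energy_class_eq_iff:
  assumes "finite_energy G c u" "finite_energy G c v"
  shows "energy_class G c u = energy_class G c v \<longleftrightarrow> (\<exists>k. \<forall>x\<in>G. u x = v x + k)"
proof
  assume "energy_class G c u = energy_class G c v"
  then show "\<exists>k. \<forall>x\<in>G. u x = v x + k"
    using mem_energy_class_self[OF assms(1)] by (simp add: energy_class_def)
next
  assume "\<exists>k. \<forall>x\<in>G. u x = v x + k"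
  then obtain k where k: "\<forall>x\<in>G. u x = v x + k" by blast
  have "(\<exists>j. \<forall>x\<in>G. w x = u x + j) \<longleftrightarrow> (\<exists>j. \<forall>x\<in>G. w x = v x + j)" for w :: "'a \<Rightarrow> complex"
  proof
    assume "\<exists>j. \<forall>x\<in>G. w x = u x + j"
    then show "\<exists>j. \<forall>x\<in>G. w x = v x + j"
      using k by (metis add.assoc)
  next
    assume "\<exists>j. \<forall>x\<in>G. w x = v x + j"
    then obtain j where "\<forall>x\<in>G. w x = v x + j" by blast
    with k have "\<forall>x\<in>G. w x = u x + (j - k)" by (simp add: algebra_simps)
    then show "\<exists>j. \<forall>x\<in>G. w x = u x + j" by blast
  qed
  then show "energy_class G c u = energy_class G c v"
    by (simp add: energy_class_def)
qed

lemma energy_space_some_representative: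
  assumes "U \<in> energy_space G c"
  shows "finite_energy G c (SOME u. u \<in> U) \<and> U = energy_class G c (SOME u. u \<in> U)"
proof -
  obtain u where u: "U = energy_class G c u" "finite_energy G c u"
    using assms by (auto simp: energy_space_def)
  then have "(SOME u. u \<in> U) \<in> U"
    using mem_energy_class_self by (metis someI)
  then obtain k where "finite_energy G c (SOME u. u \<in> U)" "\<forall>x\<in>G. (SOME u. u \<in> U) x = u x + k"
    using u(1) by (auto simp: energy_class_def)
  then show ?thesis
    using u energy_class_eq_iff by metis
qed

theorem corollary3p7:
  fixes G :: "'a set" and c b :: "'a \<Rightarrow> 'a \<Rightarrow> real"
  assumes "countable G"
    and "conductance G c" and "conductance G b"
    and "\<forall>x\<in>G. \<forall>y\<in>G. b x y \<le> c x y"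
    and "locally_finite_net G c" and "connected_net G c"
    and "locally_finite_net G b" and "connected_net G b"
  shows "inj_on (inclusion_map G b) (energy_space G c)"
proof (rule inj_onI)
  fix U V assume U: "U \<in> energy_space G c" and V: "V \<in> energy_space G c"
    and same_image: "inclusion_map G b U = inclusion_map G b V"
  define u where "u = (SOME u. u \<in> U)"
  define v where "v = (SOME v. v \<in> V)"
  have u: "finite_energy G c u" "U = energy_class G c u"
    using energy_space_some_representative[OF U] by (simp_all add: u_def)
  have v: "finite_energy G c v" "V = energy_class G c v"
    using energy_space_some_representative[OF V] by (simp_all add: v_def)
  have "energy_class G b u = energy_class G b v"
    using same_image by (simp add: inclusion_map_def u_def v_def)
  then have "\<exists>k. \<forall>x\<in>G. u x = v x + k"
    using energy_class_eq_iff finite_energy_mono[OF assms(3,4)] u(1) v(1) by blast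
  then show "U = V"
    using energy_class_eq_iff u v by blast
qed

end
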